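(* Let $q$ be an odd prime power, let $t\ge0$ and $k\ge1$ be integers and $n=2k$. Let $\delta\in\mathbb{F}_{q^k}$, let $\alpha\in\mathbb{F}_{q^n}$ satisfy $\alpha^{q^k}=-\alpha$ and $\beta\in\mathbb{F}_{q^n}$ satisfy $\beta^{q^k}=-\beta$. Let $L(x)=\sum_i a_i x^{q^i}$ be a $q$-polynomial with all coefficients $a_i\in\mathbb{F}_{q^k}$. Then $$f(x)=\alpha(x^{q^k}+x+\delta)^t+\beta\,\mathrm{Tr}(x)+L(x)$$ is a permutation polynomial of $\mathbb{F}_{q^n}$ if and only if $L(x)$ is a permutation polynomial of $\mathbb{F}_{q^n}$.
   Context: $\mathrm{Tr}$ denotes the trace function from $\mathbb{F}_{q^n}$ to $\mathbb{F}_q$, $\mathrm{Tr}(x)=x+x^q+\cdots+x^{q^{n-1}}$. A permutation polynomial of $\mathbb{F}_{q^n}$ is one inducing a bijection of $\mathbb{F}_{q^n}$. *)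

theory Defs
  imports "HOL-Computational_Algebra.Primes"
begin

definition qtrace :: "nat \<Rightarrow> nat \<Rightarrow> 'a::comm_ring_1 \<Rightarrow> 'a" where
  "qtrace q n x = (\<Sum>i<n. x ^ (q ^ i))"

definition qpoly :: "nat \<Rightarrow> (nat \<Rightarrow> 'a::comm_ring_1) \<Rightarrow> nat \<Rightarrow> 'a \<Rightarrow> 'a" where
  "qpoly q a m x = (\<Sum>i<m. a i * x ^ (q ^ i))"

definition is_perm :: "('a \<Rightarrow> 'a) \<Rightarrow> bool" where
  "is_perm f = bij f"

end

theory Submission
  imports Defs "HOL-Number_Theory.Residues"
begin

text \<open>
  Write Q = q^k and T x = x^Q + x for the trace of F_{q^n} over F_{q^k}. Then Tr = Tr_k o T,
  so f = Phi o T + L with Phi y = alpha (y + delta)^t + beta Tr_k(y). For y in F_{q^k} the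
  element z = Phi y satisfies z^Q = -z, so T o Phi o T = 0; and L, having coefficients in
  F_{q^k}, commutes with T. Hence T o f = L o T, and a counting argument on the image of T
  shows that f is bijective iff L is.
\<close>

lemma bij_comp_add_iff:
  fixes T L \<Phi> :: "'a::{finite,group_add} \<Rightarrow> 'a"
  assumes T_add: "\<And>x y. T (x + y) = T x + T y"
    and commute: "\<And>x. L (T x) = T (L x)"
    and kernel: "\<And>x. T (\<Phi> (T x)) = 0"
  shows "bij (\<lambda>x. \<Phi> (T x) + L x) \<longleftrightarrow> bij L"
proof -
  let ?f = "\<lambda>x. \<Phi> (T x) + L x"
  have T_f: "T (?f x) = L (T x)" for x
    by (simp add: T_add kernel commute)
  have bij_iff_inj: "bij g \<longleftrightarrow> inj g" for g :: "'a \<Rightarrow> 'a"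
    using finite_UNIV_inj_surj[of g] by (auto simp: bij_def)
  show ?thesis
  proof
    assume "bij ?f"
    have "L ` range T = range T"
    proof
      show "L ` range T \<subseteq> range T"
        using commute by auto
      show "range T \<subseteq> L ` range T"
      proof
        fix r assume "r \<in> range T"
        then obtain w where "r = T w" by blast
        moreover obtain x where "w = ?f x"
          using \<open>bij ?f\<close> by (blast dest: bij_is_surj)
        ultimately show "r \<in> L ` range T"
          using T_f by auto
      qed
    qed
    then have "inj_on L (range T)"
      by (simp add: eq_card_imp_inj_on)
    have "inj L"
    proof (rule injI)
      fix x y assume "L x = L y"
      then have "L (T x) = L (T y)"
        by (simp add: commute)
      then have "T x = T y"
        using \<open>inj_on L (range T)\<close> by (auto dest: inj_onD)
      then have "?f x = ?f y"
        using \<open>L x = L y\<close> by simp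
      then show "x = y"
        using \<open>bij ?f\<close> by (auto dest: bij_is_inj injD)
    qed
    then show "bij L"
      by (simp add: bij_iff_inj)
  next
    assume "bij L"
    then have "inj L"
      by (rule bij_is_inj)
    have "inj ?f"
    proof (rule injI)
      fix x y assume eq: "?f x = ?f y"
      then have "L (T x) = L (T y)"
        by (metis T_f)
      then have "T x = T y"
        by (rule injD[OF \<open>inj L\<close>])
      then have "L x = L y"
        using eq by simp
      then show "x = y"
        by (rule injD[OF \<open>inj L\<close>])
    qed
    then show "bij ?f"
      by (simp add: bij_iff_inj)
  qed
qed

lemma prime_CHAR_finite: "prime CHAR('a::{field,finite})"
  by (simp add: prime_CHAR_semidom finite_imp_CHAR_pos)

lemma CHAR_eq_of_card_prime_power:
  assumes "prime p" and "card (UNIV :: 'a::{field,finite} set) = p ^ N"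
  shows "CHAR('a) = p"
proof -
  have "CHAR('a) dvd p ^ N"
    using CHAR_dvd_CARD[where 'a = 'a] assms(2) by simp
  then show ?thesis
    using assms(1) prime_CHAR_finite[where 'a = 'a] by (metis prime_dvd_power primes_dvd_imp_eq)
qed

text \<open>
  This is finite_field_power_card_eq_same for the sort {field, finite}, which is not
  known to be an instance of the class finite_field.
\<close>
lemma power_card_UNIV_eq_self:
  fixes x :: "'a::{field,finite}"
  shows "x ^ card (UNIV :: 'a set) = x"
proof (cases "x = 0")
  case True
  then show ?thesis
    using finite_UNIV_card_ge_0[where 'a = 'a] by simp
next
  case False
  let ?U = "UNIV - {0 :: 'a}"
  have "bij_betw ((*) x) ?U ?U"
    by (rule bij_betwI[where g = "\<lambda>y. y / x"]) (use False in auto)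
  then have "\<Prod>?U = (\<Prod>y\<in>?U. x * y)"
    by (simp add: prod.reindex_bij_betw[of _ _ _ "\<lambda>y. y"])
  also have "\<dots> = x ^ card ?U * \<Prod>?U"
    by (simp add: prod.distrib)
  finally have unit: "x ^ card ?U = 1"
    by simp
  have card: "card (UNIV :: 'a set) = Suc (card ?U)"
    using finite_UNIV_card_ge_0[where 'a = 'a] by (simp add: card_Diff_singleton)
  show ?thesis
    by (simp only: card power_Suc unit mult_1_right)
qed

lemma power_CHAR_power_add:
  fixes x y :: "'a::{field,finite}"
  assumes "q = CHAR('a) ^ e"
  shows "(x + y) ^ q ^ j = x ^ q ^ j + y ^ q ^ j"
  by (rule freshmans_dream'[OF prime_CHAR_finite, where n = "e * j"])
    (simp add: assms power_mult)

lemma power_CHAR_power_sum: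
  fixes g :: "'b \<Rightarrow> 'a::{field,finite}"
  assumes "q = CHAR('a) ^ e"
  shows "(\<Sum>i\<in>A. g i) ^ q ^ j = (\<Sum>i\<in>A. g i ^ q ^ j)"
  by (rule freshmans_dream_sum'[OF prime_CHAR_finite, where n = "e * j"])
    (simp add: assms power_mult)

definition reltrace :: "nat \<Rightarrow> nat \<Rightarrow> 'a::comm_ring_1 \<Rightarrow> 'a" where
  "reltrace q k x = x ^ q ^ k + x"

lemma qpoly_add:
  fixes x y :: "'a::{field,finite}"
  assumes "q = CHAR('a) ^ e"
  shows "qpoly q a m (x + y) = qpoly q a m x + qpoly q a m y"
  by (simp add: qpoly_def power_CHAR_power_add[OF assms] distrib_left sum.distrib)

lemma qpoly_power_commute:
  fixes x :: "'a::{field,finite}"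
  assumes "q = CHAR('a) ^ e" and "\<forall>i<m. a i ^ q ^ j = a i"
  shows "qpoly q a m x ^ q ^ j = qpoly q a m (x ^ q ^ j)"
proof -
  have "qpoly q a m x ^ q ^ j = (\<Sum>i<m. (a i * x ^ q ^ i) ^ q ^ j)"
    unfolding qpoly_def by (rule power_CHAR_power_sum[OF assms(1)])
  also have "\<dots> = qpoly q a m (x ^ q ^ j)"
    unfolding qpoly_def using assms(2)
    by (intro sum.cong) (simp_all add: power_mult_distrib mult.commute flip: power_mult)
  finally show ?thesis .
qed

lemma qtrace_power_commute:
  fixes y :: "'a::{field,finite}"
  assumes "q = CHAR('a) ^ e"
  shows "qtrace q k y ^ q ^ j = qtrace q k (y ^ q ^ j)"
  unfolding qtrace_def power_CHAR_power_sum[OF assms]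
  by (simp add: mult.commute flip: power_mult)

lemma qtrace_double:
  fixes x :: "'a::{field,finite}"
  assumes "q = CHAR('a) ^ e"
  shows "qtrace q (2 * k) x = qtrace q k (reltrace q k x)"
proof -
  have split: "(\<Sum>i<k + n. g i) = (\<Sum>i<k. g i) + (\<Sum>i<n. g (k + i))" for g :: "nat \<Rightarrow> 'a" and n
    by (induction n) (simp_all add: add_ac)
  have "qtrace q (2 * k) x = (\<Sum>i<k. x ^ q ^ i) + (\<Sum>i<k. x ^ q ^ (k + i))"
    unfolding qtrace_def mult_2 by (rule split)
  also have "\<dots> = qtrace q k (reltrace q k x)"
    unfolding qtrace_def reltrace_def power_CHAR_power_add[OF assms] sum.distrib
    by (simp add: power_add add.commute mult.commute flip: power_mult)
  finally show ?thesis .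
qed

lemma reltrace_add:
  fixes x y :: "'a::{field,finite}"
  assumes "q = CHAR('a) ^ e"
  shows "reltrace q k (x + y) = reltrace q k x + reltrace q k y"
  by (simp add: reltrace_def power_CHAR_power_add[OF assms] add_ac)

lemma reltrace_power_eq_self:
  fixes x :: "'a::{field,finite}"
  assumes "q = CHAR('a) ^ e" and "card (UNIV :: 'a set) = q ^ (2 * k)"
  shows "reltrace q k x ^ q ^ k = reltrace q k x"
proof -
  have "(x ^ q ^ k) ^ q ^ k = x"
    using power_card_UNIV_eq_self[of x] assms(2) by (simp add: mult_2 power_add flip: power_mult)
  then show ?thesis
    by (simp add: reltrace_def power_CHAR_power_add[OF assms(1)] add.commute)
qed

lemma qpoly_reltrace_commute:
  fixes x :: "'a::{field,finite}"
  assumes "q = CHAR('a) ^ e" and "\<forall>i<m. a i ^ q ^ k = a i"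
  shows "qpoly q a m (reltrace q k x) = reltrace q k (qpoly q a m x)"
  by (simp add: reltrace_def qpoly_add[OF assms(1)] qpoly_power_commute[OF assms])

lemma twisted_term_power_eq_neg:
  fixes y \<delta> \<alpha> \<beta> :: "'a::{field,finite}"
  assumes "q = CHAR('a) ^ e" and "y ^ q ^ k = y" and "\<delta> ^ q ^ k = \<delta>"
    and "\<alpha> ^ q ^ k = - \<alpha>" and "\<beta> ^ q ^ k = - \<beta>"
  shows "(\<alpha> * (y + \<delta>) ^ t + \<beta> * qtrace q k y) ^ q ^ k = - (\<alpha> * (y + \<delta>) ^ t + \<beta> * qtrace q k y)"
proof -
  have "((y + \<delta>) ^ t) ^ q ^ k = ((y + \<delta>) ^ q ^ k) ^ t"
    by (simp add: mult.commute flip: power_mult)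
  also have "\<dots> = (y + \<delta>) ^ t"
    using assms(2,3) by (simp add: power_CHAR_power_add[OF assms(1)])
  finally have "((y + \<delta>) ^ t) ^ q ^ k = (y + \<delta>) ^ t" .
  moreover have "qtrace q k y ^ q ^ k = qtrace q k y"
    using assms(2) by (simp add: qtrace_power_commute[OF assms(1)])
  ultimately show ?thesis
    using assms(4,5) by (simp add: power_CHAR_power_add[OF assms(1)] power_mult_distrib)
qed

theorem mainTheorem5:
  fixes q p e k t m :: nat
    and \<delta> \<alpha> \<beta> :: "'a::{field,finite}"
    and a :: "nat \<Rightarrow> 'a"
  assumes "prime p" and "e \<ge> 1" and "q = p ^ e" and "odd q"
    and "k \<ge> 1" and "card (UNIV :: 'a set) = q ^ (2 * k)"
    and "\<delta> ^ (q ^ k) = \<delta>"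
    and "\<alpha> ^ (q ^ k) = - \<alpha>"
    and "\<beta> ^ (q ^ k) = - \<beta>"
    and "\<forall>i<m. a i ^ (q ^ k) = a i"
  shows "is_perm (\<lambda>x. \<alpha> * (x ^ (q ^ k) + x + \<delta>) ^ t + \<beta> * qtrace q (2 * k) x + qpoly q a m x)
         \<longleftrightarrow> is_perm (qpoly q a m)"
proof -
  have "card (UNIV :: 'a set) = p ^ (e * (2 * k))"
    using assms(3,6) by (simp add: power_mult)
  then have "CHAR('a) = p"
    by (rule CHAR_eq_of_card_prime_power[OF assms(1)])
  then have q_char: "q = CHAR('a) ^ e"
    using assms(3) by simp
  define \<Phi> where "\<Phi> y = \<alpha> * (y + \<delta>) ^ t + \<beta> * qtrace q k y" for y
  have f_eq: "(\<lambda>x. \<alpha> * (x ^ (q ^ k) + x + \<delta>) ^ t + \<beta> * qtrace q (2 * k) x + qpoly q a m x)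
      = (\<lambda>x. \<Phi> (reltrace q k x) + qpoly q a m x)"
    by (simp add: \<Phi>_def qtrace_double[OF q_char] reltrace_def)
  have "\<Phi> (reltrace q k x) ^ q ^ k = - \<Phi> (reltrace q k x)" for x
    unfolding \<Phi>_def
    by (rule twisted_term_power_eq_neg[OF q_char reltrace_power_eq_self[OF q_char assms(6)] assms(7-9)])
  then have "reltrace q k (\<Phi> (reltrace q k x)) = 0" for x
    by (simp add: reltrace_def)
  then show ?thesis
    unfolding is_perm_def f_eq
    by (intro bij_comp_add_iff reltrace_add[OF q_char] qpoly_reltrace_commute[OF q_char assms(10)])
qed

end
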